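(* For any $t>0$ there exists $L>0$, depending only on $\xi$ and $t$, such that for any $N$, \[ \mathbb P\Big\{\forall\sigma,\pi\in\overline M_N:\ \frac1N|H_N(\sigma)-H_N(\pi)|\le L\max_{s\in\mathscr S}\sqrt{R_s(\sigma-\pi,\sigma-\pi)}\Big\}>1-e^{-tN}. \]
   Context: Fix a finite set $\mathscr S$ of species. For each $N\ge1$, $\{1,\dots,N\}=\bigcup_{s\in\mathscr S}I_s$ with disjoint $I_s$, $N_s=|I_s|$, $N_s/N\to\lambda_s\in(0,1)$. $R_s(\sigma,\sigma')=N_s^{-1}\sum_{i\in I_s}\sigma_i\sigma'_i$ for $\sigma,\sigma'\in\mathbb R^N$. $\overline M_N=\{\sigma\in\mathbb R^N:\sum_{i\in I_s}\sigma_i^2\le N_s\ \forall s\in\mathscr S\}$. $P=\{p\in\mathbb Z_{\ge0}^{\mathscr S}:|p|\ge1\}$. The mixture is $\xi(x)=\sum_{p\in P}\Delta_p^2\prod_sx(s)^{p(s)}$, $\Delta_p\ge0$, $\xi(1+\epsilon)<\infty$ for some $\epsilon>0$. $H_N(\sigma)=\sqrt N\sum_{k\ge1}\sum_{i_1,\dots,i_k=1}^N\Delta_{i_1,\dots,i_k}J_{i_1,\dots,i_k}\sigma_{i_1}\cdots\sigma_{i_k}$ for $\sigma\in\mathbb R^N$, with $J$ i.i.d. standard Gaussian and $\Delta_{i_1,\dots,i_k}^2=\Delta_p^2\frac{\prod_sp(s)!}{k!}\prod_sN_s^{-p(s)}$ when $\#\{j\le k:i_j\in I_s\}=p(s)$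 for all $s$. *)

theory Defs
  imports "HOL-Probability.Probability"
begin

definition gauss_space :: "(nat list \<Rightarrow> real) measure" where
  "gauss_space = (\<Pi>\<^sub>M is\<in>(UNIV :: nat list set). density lborel std_normal_density)"

text \<open>Species partition: I N s is the set I_s at size N.\<close>
definition Nsp :: "(nat \<Rightarrow> 's \<Rightarrow> nat set) \<Rightarrow> nat \<Rightarrow> 's \<Rightarrow> nat" where
  "Nsp I N s = card (I N s)"

definition species_count :: "(nat \<Rightarrow> 's \<Rightarrow> nat set) \<Rightarrow> nat \<Rightarrow> nat list \<Rightarrow> 's \<Rightarrow> nat" where
  "species_count I N is s = card {j. j < length is \<and> is ! j \<in> I N s}"

definition Delta_idx :: "(('s::finite \<Rightarrow> nat) \<Rightarrow> real) \<Rightarrow> (nat \<Rightarrow> 's \<Rightarrow> nat set) \<Rightarrow> nat \<Rightarrow> nat list \<Rightarrow> real" where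
  "Delta_idx Delta I N is =
     (let p = species_count I N is in
      sqrt ((Delta p)\<^sup>2 * (\<Prod>s\<in>UNIV. fact (p s)) / fact (length is)
            * (\<Prod>s\<in>UNIV. inverse (real (Nsp I N s)) ^ p s)))"

definition HN :: "(('s::finite \<Rightarrow> nat) \<Rightarrow> real) \<Rightarrow> (nat \<Rightarrow> 's \<Rightarrow> nat set) \<Rightarrow> nat
                  \<Rightarrow> (nat list \<Rightarrow> real) \<Rightarrow> (nat \<Rightarrow> real) \<Rightarrow> real" where
  "HN Delta I N J \<sigma> = sqrt (real N) *
     (\<Sum>k. \<Sum>is\<in>{is. length is = Suc k \<and> set is \<subseteq> {1..N}}.
            Delta_idx Delta I N is * J is * (\<Prod>j<length is. \<sigma> (is ! j)))"

definition Rs :: "(nat \<Rightarrow> 's \<Rightarrow> nat set) \<Rightarrow> nat \<Rightarrow> 's \<Rightarrow> (nat \<Rightarrow> real) \<Rightarrow> (nat \<Rightarrow> real) \<Rightarrow> real" where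
  "Rs I N s \<sigma> \<sigma>' = (\<Sum>i\<in>I N s. \<sigma> i * \<sigma>' i) / real (Nsp I N s)"

definition Mbar :: "(nat \<Rightarrow> 's \<Rightarrow> nat set) \<Rightarrow> nat \<Rightarrow> (nat \<Rightarrow> real) set" where
  "Mbar I N = {\<sigma>. \<forall>s. (\<Sum>i\<in>I N s. (\<sigma> i)\<^sup>2) \<le> real (Nsp I N s)}"

definition Pset :: "('s::finite \<Rightarrow> nat) set" where
  "Pset = {p. (\<Sum>s\<in>UNIV. p s) \<ge> 1}"

definition xi :: "(('s::finite \<Rightarrow> nat) \<Rightarrow> real) \<Rightarrow> ('s \<Rightarrow> real) \<Rightarrow> real" where
  "xi Delta x = (\<Sum>\<^sub>\<infinity>p\<in>Pset. (Delta p)\<^sup>2 * (\<Prod>s\<in>UNIV. x s ^ p s))"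

end

theory Submission
  imports Defs "HOL-Combinatorics.Multiset_Permutations"
begin

text \<open>
  Write \<open>H\<^sub>N(\<sigma>) = \<surd>N \<Sum>\<^sub>k F\<^sub>k(\<sigma>, \<dots>, \<sigma>)\<close>, where \<open>F\<^sub>k\<close> is the \<open>k\<close>-linear form with
  Gaussian coefficients \<open>\<Delta>\<^sub>i J\<^sub>i\<close>. Changing one slot at a time gives
  \<open>|F\<^sub>k(\<sigma>, \<dots>, \<sigma>) - F\<^sub>k(\<pi>, \<dots>, \<pi>)| \<le> k r M\<^sub>k\<close>, where \<open>r = max\<^sub>s \<surd>R\<^sub>s(\<sigma> - \<pi>, \<sigma> - \<pi>)\<close> and
  \<open>M\<^sub>k\<close> is the supremum of \<open>|F\<^sub>k|\<close> over \<open>Mbar\<^sup>k\<close>; so it suffices that \<open>M\<^sub>k \<le> 2 \<surd>N \<alpha>\<^sub>k\<close>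
  with \<open>\<Sum>\<^sub>k k \<alpha>\<^sub>k < \<infinity>\<close>. The same telescoping shows that \<open>M\<^sub>k\<close> is at most twice the maximum of
  \<open>|F\<^sub>k|\<close> over a lattice net of mesh \<open>1/(2k)\<close>, which has at most \<open>exp(4kN)\<close> points. At a
  fixed point of the net \<open>F\<^sub>k\<close> is a centred Gaussian of variance at most
  \<open>(\<xi>(1+\<epsilon>) + 1) (1+\<epsilon>)^(-k)\<close> (group the index tuples by their species), so for
  \<open>\<alpha>\<^sub>k \<approx> k (1+\<epsilon>)^(-k/2)\<close> the union bound over the net costs \<open>2 exp(-tN) exp(-3k)\<close>,
  which sums over \<open>k\<close> to less than \<open>exp(-tN)\<close>.
\<close>

section \<open>Gaussian linear forms\<close>

lemma prob_space_std_normal: "prob_space std_normal_distribution"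
  by (rule prob_space_normal_density) simp

lemma product_prob_space_std_normal: "product_prob_space (\<lambda>_::nat list. std_normal_distribution)"
  by (rule product_prob_spaceI) (rule prob_space_std_normal)

lemma prob_space_gauss_space: "prob_space gauss_space"
  unfolding gauss_space_def by (rule prob_space_PiM) (rule prob_space_std_normal)

lemma sets_gauss_space: "sets gauss_space = sets (\<Pi>\<^sub>M i\<in>UNIV. (borel :: real measure))"
  unfolding gauss_space_def by (rule sets_PiM_cong) auto

lemma measurable_gauss_coordinate [measurable]: "(\<lambda>J. J i) \<in> borel_measurable gauss_space"
  unfolding measurable_cong_sets[OF sets_gauss_space refl]
  by (rule measurable_component_singleton) simp

lemma distr_gauss_coordinate: "distr gauss_space borel (\<lambda>J. J i) = std_normal_distribution"
proof -
  interpret product_prob_space "\<lambda>_. std_normal_distribution" "UNIV :: nat list set"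
    by (rule product_prob_space_std_normal)
  have "distr gauss_space borel (\<lambda>J. J i) = distr gauss_space std_normal_distribution (\<lambda>J. J i)"
    by (rule distr_cong) auto
  also have "\<dots> = std_normal_distribution"
    unfolding gauss_space_def by (rule PiM_component) simp
  finally show ?thesis .
qed

lemma indep_vars_gauss_coordinates: "prob_space.indep_vars gauss_space (\<lambda>_. borel) (\<lambda>i J. J i) UNIV"
proof -
  interpret prob_space gauss_space by (rule prob_space_gauss_space)
  have "distr gauss_space (\<Pi>\<^sub>M i\<in>UNIV. borel) (\<lambda>J. \<lambda>i\<in>UNIV. J i) = gauss_space"
    using distr_id2[OF sets_gauss_space[symmetric]] by (simp add: restrict_UNIV)
  also have "\<dots> = (\<Pi>\<^sub>M i\<in>UNIV. distr gauss_space borel (\<lambda>J. J i))"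
    by (simp only: distr_gauss_coordinate) (simp add: gauss_space_def)
  finally show ?thesis
    by (subst indep_vars_iff_distr_eq_PiM) auto
qed

lemma nn_integral_exp_std_normal:
  "(\<integral>\<^sup>+x. ennreal (exp (b * x)) \<partial>std_normal_distribution) = ennreal (exp (b\<^sup>2 / 2))"
proof -
  have shift: "std_normal_density x * exp (b * x) = exp (b\<^sup>2 / 2) * normal_density b 1 x" for x
    unfolding normal_density_def
    by (simp add: exp_add[symmetric] power2_eq_square algebra_simps) (simp add: field_simps)
  have "(\<integral>\<^sup>+x. ennreal (exp (b * x)) \<partial>std_normal_distribution)
      = (\<integral>\<^sup>+x. ennreal (exp (b\<^sup>2 / 2)) * ennreal (normal_density b 1 x) \<partial>lborel)"
    by (subst nn_integral_density)
       (auto intro!: nn_integral_cong simp: ennreal_mult'[symmetric] shift)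
  also have "\<dots> = ennreal (exp (b\<^sup>2 / 2))"
    by (subst nn_integral_cmult) (auto simp: nn_integral_eq_integral)
  finally show ?thesis .
qed

lemma nn_integral_exp_gauss_linear:
  assumes "finite S"
  shows "(\<integral>\<^sup>+J. ennreal (exp (\<Sum>i\<in>S. c i * J i)) \<partial>gauss_space)
       = ennreal (exp ((\<Sum>i\<in>S. (c i)\<^sup>2) / 2))"
proof -
  interpret prob_space gauss_space by (rule prob_space_gauss_space)
  have indep: "indep_vars (\<lambda>_. borel) (\<lambda>i J. ennreal (exp (c i * J i))) S"
    by (rule indep_vars_compose2[OF indep_vars_subset[OF indep_vars_gauss_coordinates]]) auto
  have coord: "(\<integral>\<^sup>+J. ennreal (exp (c i * J i)) \<partial>gauss_space) = ennreal (exp ((c i)\<^sup>2 / 2))" for i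
    using nn_integral_distr[of "\<lambda>J. J i" gauss_space borel "\<lambda>x. ennreal (exp (c i * x))"]
    by (simp add: distr_gauss_coordinate nn_integral_exp_std_normal)
  have "(\<integral>\<^sup>+J. ennreal (exp (\<Sum>i\<in>S. c i * J i)) \<partial>gauss_space)
      = (\<integral>\<^sup>+J. (\<Prod>i\<in>S. ennreal (exp (c i * J i))) \<partial>gauss_space)"
    using assms by (simp add: exp_sum prod_ennreal)
  also have "\<dots> = (\<Prod>i\<in>S. ennreal (exp ((c i)\<^sup>2 / 2)))"
    using indep_vars_nn_integral[OF assms indep] by (simp add: coord)
  also have "\<dots> = ennreal (exp ((\<Sum>i\<in>S. (c i)\<^sup>2) / 2))"
    using assms by (simp add: prod_ennreal exp_sum sum_divide_distrib)
  finally show ?thesis .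
qed

text \<open>Chernoff bound with the optimal exponent \<open>a / v\<close>.\<close>
lemma gauss_linear_tail:
  assumes S: "finite S" and v: "v > 0" and cv: "(\<Sum>i\<in>S. (c i)\<^sup>2) \<le> v" and a: "a > 0"
  shows "measure gauss_space {J \<in> space gauss_space. a \<le> (\<Sum>i\<in>S. c i * J i)} \<le> exp (- a\<^sup>2 / (2 * v))"
proof -
  interpret prob_space gauss_space by (rule prob_space_gauss_space)
  define l where "l = a / v"
  have l: "l > 0" using a v by (simp add: l_def)
  have "emeasure gauss_space {J \<in> space gauss_space. a \<le> (\<Sum>i\<in>S. c i * J i)}
      \<le> ennreal (exp (- l * a)) * (\<integral>\<^sup>+J. ennreal (exp (l * (\<Sum>i\<in>S. c i * J i))) \<partial>gauss_space)"
    using Chernoff_ineq_nn_integral_ge[where M = gauss_space and A = "space gauss_space"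
        and f = "\<lambda>J. \<Sum>i\<in>S. c i * J i" and a = a, OF l]
    by simp
  also have "(\<integral>\<^sup>+J. ennreal (exp (l * (\<Sum>i\<in>S. c i * J i))) \<partial>gauss_space)
      = ennreal (exp ((\<Sum>i\<in>S. (l * c i)\<^sup>2) / 2))"
    using nn_integral_exp_gauss_linear[OF S, of "\<lambda>i. l * c i"]
    by (simp add: sum_distrib_left mult.assoc)
  also have "ennreal (exp (- l * a)) * \<dots> \<le> ennreal (exp (- a\<^sup>2 / (2 * v)))"
  proof -
    have "(\<Sum>i\<in>S. (l * c i)\<^sup>2) \<le> l\<^sup>2 * v"
      using cv by (simp add: power_mult_distrib sum_distrib_left[symmetric] mult_left_mono)
    then have "- l * a + (\<Sum>i\<in>S. (l * c i)\<^sup>2) / 2 \<le> - a\<^sup>2 / (2 * v)"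
      using v by (simp add: l_def field_simps power2_eq_square)
    then show ?thesis by (simp add: ennreal_mult'[symmetric] exp_add[symmetric])
  qed
  finally show ?thesis by (simp add: emeasure_eq_measure)
qed

lemma gauss_linear_abs_tail:
  assumes S: "finite S" and v: "v > 0" and cv: "(\<Sum>i\<in>S. (c i)\<^sup>2) \<le> v" and a: "a > 0"
  shows "measure gauss_space {J \<in> space gauss_space. a < \<bar>\<Sum>i\<in>S. c i * J i\<bar>}
       \<le> 2 * exp (- a\<^sup>2 / (2 * v))"
proof -
  interpret prob_space gauss_space by (rule prob_space_gauss_space)
  let ?E = "\<lambda>c. {J \<in> space gauss_space. a \<le> (\<Sum>i\<in>S. c i * J i)}"
  have "measure gauss_space {J \<in> space gauss_space. a < \<bar>\<Sum>i\<in>S. c i * J i\<bar>}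
      \<le> measure gauss_space (?E c \<union> ?E (\<lambda>i. - c i))"
    by (intro finite_measure_mono) (auto simp: sum_negf)
  also have "\<dots> \<le> measure gauss_space (?E c) + measure gauss_space (?E (\<lambda>i. - c i))"
    by (intro measure_Un_le) measurable
  also have "\<dots> \<le> 2 * exp (- a\<^sup>2 / (2 * v))"
    using gauss_linear_tail[OF S v _ a, of c] gauss_linear_tail[OF S v _ a, of "\<lambda>i. - c i"] cv
    by simp
  finally show ?thesis .
qed

section \<open>Multilinear forms and nets\<close>

definition index_tuples :: "nat \<Rightarrow> nat \<Rightarrow> nat list set" where
  "index_tuples N k = {is. length is = k \<and> set is \<subseteq> {1..N}}"

lemma finite_index_tuples: "finite (index_tuples N k)"
  unfolding index_tuples_def using finite_lists_length_eq[of "{1..N}" k] by (simp add: conj_commute)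

definition multilinear_form :: "nat \<Rightarrow> nat \<Rightarrow> (nat list \<Rightarrow> real) \<Rightarrow> (nat \<Rightarrow> nat \<Rightarrow> real) \<Rightarrow> real" where
  "multilinear_form N k a U = (\<Sum>is\<in>index_tuples N k. a is * (\<Prod>j<k. U j (is ! j)))"

lemma multilinear_form_cong:
  assumes "\<And>j. j < k \<Longrightarrow> U j = V j"
  shows "multilinear_form N k a U = multilinear_form N k a V"
  unfolding multilinear_form_def using assms by (intro sum.cong refl arg_cong2[where f = "(*)"] prod.cong) auto

lemma prod_diff_telescope:
  fixes a b :: "nat \<Rightarrow> 'a::comm_ring_1"
  shows "(\<Prod>l<k. a l) - (\<Prod>l<k. b l) =
    (\<Sum>j<k. \<Prod>l<k. if l < j then b l else if l = j then a l - b l else a l)"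
proof (induction k)
  case (Suc k)
  have "(\<Prod>l<Suc k. a l) - (\<Prod>l<Suc k. b l) =
     ((\<Prod>l<k. a l) - (\<Prod>l<k. b l)) * a k + (\<Prod>l<k. b l) * (a k - b k)"
    by (simp add: algebra_simps)
  also have "((\<Prod>l<k. a l) - (\<Prod>l<k. b l)) * a k =
     (\<Sum>j<k. \<Prod>l<Suc k. if l < j then b l else if l = j then a l - b l else a l)"
    unfolding Suc.IH sum_distrib_right by (intro sum.cong) auto
  also have "(\<Prod>l<k. b l) * (a k - b k) =
     (\<Prod>l<Suc k. if l < k then b l else if l = k then a l - b l else a l)"
    by simp
  finally show ?case by simp
qed simp

lemma prod_lessThan_fun_upd:
  fixes f :: "nat \<Rightarrow> 'a::comm_monoid_mult"
  assumes "j < k"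
  shows "(\<Prod>l<k. (f(j := x)) l) = x * (\<Prod>l\<in>{..<k} - {j}. f l)"
  using assms by (subst prod.remove[of _ j]) (auto intro!: prod.cong)

lemma multilinear_form_diff_hybrid:
  assumes "c \<noteq> 0"
  shows "multilinear_form N k a U - multilinear_form N k a V =
    c * (\<Sum>j<k. multilinear_form N k a
           ((\<lambda>l. if l < j then V l else U l)(j := (\<lambda>i. (U j i - V j i) / c))))"
proof -
  have slot: "(\<Prod>l<k. if l < j then V l (is ! l) else if l = j then U l (is ! l) - V l (is ! l)
                        else U l (is ! l))
      = c * (\<Prod>l<k. ((\<lambda>l. if l < j then V l else U l)(j := (\<lambda>i. (U j i - V j i) / c))) l (is ! l))"
    if "j < k" for j "is"
  proof -
    define f where "f l = (if l < j then V l (is ! l) else U l (is ! l))" for l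
    define d where "d = U j (is ! j) - V j (is ! j)"
    have "(\<Prod>l<k. if l < j then V l (is ! l) else if l = j then U l (is ! l) - V l (is ! l)
                  else U l (is ! l)) = (\<Prod>l<k. (f(j := d)) l)"
      by (intro prod.cong) (auto simp: f_def d_def)
    also have "\<dots> = c * ((d / c) * (\<Prod>l\<in>{..<k} - {j}. f l))"
      using prod_lessThan_fun_upd[OF that, of f d] assms by simp
    also have "(d / c) * (\<Prod>l\<in>{..<k} - {j}. f l) = (\<Prod>l<k. (f(j := d / c)) l)"
      by (rule prod_lessThan_fun_upd[OF that, symmetric])
    also have "(\<Prod>l<k. (f(j := d / c)) l)
        = (\<Prod>l<k. ((\<lambda>l. if l < j then V l else U l)(j := (\<lambda>i. (U j i - V j i) / c))) l (is ! l))"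
      by (intro prod.cong) (auto simp: f_def d_def)
    finally show ?thesis .
  qed
  have "multilinear_form N k a U - multilinear_form N k a V =
      (\<Sum>is\<in>index_tuples N k. \<Sum>j<k. a is * (\<Prod>l<k. if l < j then V l (is ! l)
          else if l = j then U l (is ! l) - V l (is ! l) else U l (is ! l)))"
    unfolding multilinear_form_def sum_subtractf[symmetric] right_diff_distrib[symmetric]
      prod_diff_telescope sum_distrib_left ..
  also have "\<dots> = c * (\<Sum>j<k. multilinear_form N k a
           ((\<lambda>l. if l < j then V l else U l)(j := (\<lambda>i. (U j i - V j i) / c))))"
    unfolding multilinear_form_def sum_distrib_left
    by (subst sum.swap) (auto intro!: sum.cong simp: slot)
  finally show ?thesis .
qed

lemma multilinear_form_diff_le:
  assumes bound: "\<And>W. (\<And>j. j < k \<Longrightarrow> W j \<in> B) \<Longrightarrow> \<bar>multilinear_form N k a W\<bar> \<le> M"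
    and U: "\<And>j. j < k \<Longrightarrow> U j \<in> B" and V: "\<And>j. j < k \<Longrightarrow> V j \<in> B"
    and incr: "\<And>j. j < k \<Longrightarrow> (\<lambda>i. (U j i - V j i) / c) \<in> B" and c: "c > 0"
  shows "\<bar>multilinear_form N k a U - multilinear_form N k a V\<bar> \<le> real k * c * M"
proof -
  let ?W = "\<lambda>j. (\<lambda>l. if l < j then V l else U l)(j := (\<lambda>i. (U j i - V j i) / c))"
  have "\<bar>multilinear_form N k a U - multilinear_form N k a V\<bar>
      \<le> c * (\<Sum>j<k. \<bar>multilinear_form N k a (?W j)\<bar>)"
    unfolding multilinear_form_diff_hybrid[of c, OF order.strict_implies_not_eq[OF c, symmetric]]
    using c by (simp add: abs_mult sum_abs mult_left_mono)
  also have "\<dots> \<le> c * (\<Sum>j<k. M)"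
    using U V incr c by (intro mult_left_mono sum_mono bound) auto
  finally show ?thesis by (simp add: mult_ac)
qed

text \<open>Every point of \<open>B\<close> is a point of the net plus \<open>\<eta>\<close> times a point of \<open>B\<close>, so the
  supremum \<open>M\<close> of the form over \<open>B\<^sup>k\<close> satisfies \<open>M \<le> b + k \<eta> M\<close>.\<close>
lemma multilinear_form_le_twice_net:
  assumes "b0 \<in> B" and eta: "\<eta> > 0" "real k * \<eta> \<le> 1/2" and "net \<subseteq> B"
    and round: "\<And>u. u \<in> B \<Longrightarrow> \<exists>v\<in>net. (\<lambda>i. (u i - v i) / \<eta>) \<in> B"
    and bounded: "\<And>U. (\<And>j. j < k \<Longrightarrow> U j \<in> B) \<Longrightarrow> \<bar>multilinear_form N k a U\<bar> \<le> C"
    and on_net: "\<And>U. (\<And>j. j < k \<Longrightarrow> U j \<in> net) \<Longrightarrow> \<bar>multilinear_form N k a U\<bar> \<le> b"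
    and U: "\<And>j. j < k \<Longrightarrow> U j \<in> B"
  shows "\<bar>multilinear_form N k a U\<bar> \<le> 2 * b"
proof -
  define S where "S = {\<bar>multilinear_form N k a W\<bar> | W. \<forall>j<k. W j \<in> B}"
  define M where "M = Sup S"
  have "S \<noteq> {}" unfolding S_def using \<open>b0 \<in> B\<close> by auto
  have "bdd_above S" unfolding S_def using bounded by (auto intro!: bdd_aboveI[of _ C])
  have le_M: "\<bar>multilinear_form N k a W\<bar> \<le> M" if "\<And>j. j < k \<Longrightarrow> W j \<in> B" for W
    unfolding M_def by (rule cSup_upper[OF _ \<open>bdd_above S\<close>]) (use that in \<open>auto simp: S_def\<close>)
  have "0 \<le> M" using le_M[of "\<lambda>_. b0"] \<open>b0 \<in> B\<close> by fastforce
  have "\<bar>multilinear_form N k a W\<bar> \<le> b + M / 2" if W: "\<And>j. j < k \<Longrightarrow> W j \<in> B" for W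
  proof -
    obtain V where V: "\<And>j. j < k \<Longrightarrow> V j \<in> net \<and> (\<lambda>i. (W j i - V j i) / \<eta>) \<in> B"
      using round[OF W] by metis
    have "\<bar>multilinear_form N k a W - multilinear_form N k a V\<bar> \<le> real k * \<eta> * M"
      using V W \<open>net \<subseteq> B\<close> eta by (intro multilinear_form_diff_le[OF le_M]) auto
    also have "\<dots> \<le> 1/2 * M" using eta \<open>0 \<le> M\<close> by (intro mult_right_mono) auto
    moreover have "\<bar>multilinear_form N k a V\<bar> \<le> b" using V by (intro on_net) auto
    ultimately show ?thesis by linarith
  qed
  then have "M \<le> b + M / 2"
    unfolding M_def using \<open>S \<noteq> {}\<close> by (intro cSup_least) (auto simp: S_def M_def)
  moreover have "\<bar>multilinear_form N k a U\<bar> \<le> M" using U by (rule le_M)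
  ultimately show ?thesis by linarith
qed

section \<open>Variance of the Hamiltonian\<close>

lemma sum_lists_nth_prod:
  fixes f :: "nat \<Rightarrow> 'b \<Rightarrow> 'a::comm_semiring_1"
  assumes "\<And>j. j < k \<Longrightarrow> finite (A j)"
  shows "(\<Sum>is\<in>{is. length is = k \<and> (\<forall>j<k. is ! j \<in> A j)}. \<Prod>j<k. f j (is ! j))
       = (\<Prod>j<k. \<Sum>i\<in>A j. f j i)"
  using assms
proof (induction k arbitrary: A f)
  case (Suc k)
  let ?T = "{ys. length ys = k \<and> (\<forall>j<k. ys ! j \<in> A (Suc j))}"
  have split: "{is. length is = Suc k \<and> (\<forall>j<Suc k. is ! j \<in> A j)} = (\<lambda>(x, ys). x # ys) ` (A 0 \<times> ?T)"
  proof (intro set_eqI iffI)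
    fix xs assume "xs \<in> {is. length is = Suc k \<and> (\<forall>j<Suc k. is ! j \<in> A j)}"
    then show "xs \<in> (\<lambda>(x, ys). x # ys) ` (A 0 \<times> ?T)"
      by (cases xs) (auto intro!: image_eqI[where x = "(hd xs, tl xs)"])
  qed (auto simp: nth_Cons split: nat.split)
  have "inj_on (\<lambda>(x, ys). x # ys) (A 0 \<times> ?T)" by (auto simp: inj_on_def)
  then have "(\<Sum>is\<in>{is. length is = Suc k \<and> (\<forall>j<Suc k. is ! j \<in> A j)}. \<Prod>j<Suc k. f j (is ! j))
      = (\<Sum>(x, ys)\<in>A 0 \<times> ?T. f 0 x * (\<Prod>j<k. f (Suc j) (ys ! j)))"
    unfolding split by (subst sum.reindex)
      (auto simp del: prod.lessThan_Suc simp add: prod.lessThan_Suc_shift intro!: sum.cong)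
  also have "\<dots> = (\<Sum>x\<in>A 0. f 0 x) * (\<Sum>ys\<in>?T. \<Prod>j<k. f (Suc j) (ys ! j))"
    by (simp add: sum.cartesian_product[symmetric] sum_product)
  also have "\<dots> = (\<Prod>j<Suc k. \<Sum>i\<in>A j. f j i)"
    using Suc.IH[of "\<lambda>j. A (Suc j)" "\<lambda>j. f (Suc j)"] Suc.prems
    by (simp del: prod.lessThan_Suc add: prod.lessThan_Suc_shift)
  finally show ?case .
qed simp

lemma prod_nth_eq_prod_count_mset:
  fixes g :: "'s::finite \<Rightarrow> 'a::comm_monoid_mult"
  shows "(\<Prod>j<length ss. g (ss ! j)) = (\<Prod>s\<in>UNIV. g s ^ count (mset ss) s)"
proof (induction ss)
  case (Cons x ss)
  have "(\<Prod>j<length (x # ss). g ((x # ss) ! j)) = g x * (\<Prod>s\<in>UNIV. g s ^ count (mset ss) s)"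
    using Cons by (simp add: prod.lessThan_Suc_shift del: prod.lessThan_Suc)
  also have "\<dots> = (\<Prod>s\<in>UNIV. (if s = x then g s else 1) * g s ^ count (mset ss) s)"
    by (simp add: prod.distrib)
  also have "\<dots> = (\<Prod>s\<in>UNIV. g s ^ count (mset (x # ss)) s)"
    by (intro prod.cong) auto
  finally show ?case .
qed simp

lemma sum_count_mset:
  "(\<Sum>s\<in>(UNIV :: 's::finite set). count (mset ss) s) = length ss"
proof (induction ss)
  case (Cons x ss)
  have "(\<Sum>s\<in>(UNIV :: 's set). count (mset (x # ss)) s)
      = (\<Sum>s\<in>UNIV. (if s = x then 1 else 0) + count (mset ss) s)"
    by (intro sum.cong) auto
  with Cons show ?case by (simp add: sum.distrib)
qed simp

text \<open>Multinomial identity: a multiset \<open>A\<close> of size \<open>k\<close> is the content of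
  \<open>k! / \<Prod>\<^sub>s (count A s)!\<close> words.\<close>
lemma sum_words_multinomial:
  fixes g :: "'s::finite multiset \<Rightarrow> real"
  shows "(\<Sum>ss\<in>{ss. length ss = k}. g (mset ss) * (\<Prod>s\<in>UNIV. fact (count (mset ss) s)) / fact k)
       = (\<Sum>A\<in>mset ` {ss. length ss = k}. g A)"
proof -
  have fin: "finite {ss :: 's list. length ss = k}"
    using finite_lists_length_eq[of "UNIV :: 's set" k] by simp
  have "(\<Sum>ss\<in>{ss. length ss = k}. g (mset ss) * (\<Prod>s\<in>UNIV. fact (count (mset ss) s)) / fact k)
      = (\<Sum>A\<in>mset ` {ss. length ss = k}. \<Sum>ss\<in>permutations_of_multiset A.
            g A * (\<Prod>s\<in>UNIV. fact (count A s)) / fact k)"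
    by (subst sum.group[symmetric, OF fin finite_imageI[OF fin] image_subsetI[of _ mset]])
       (auto intro!: sum.cong arg_cong[where f = card] dest: mset_eq_length
         simp: permutations_of_multiset_def)
  also have "\<dots> = (\<Sum>A\<in>mset ` {ss. length ss = k}. g A)"
  proof (intro sum.cong refl)
    fix A assume "A \<in> mset ` {ss :: 's list. length ss = k}"
    then have "size A = k" by auto
    have "(\<Prod>s\<in>UNIV. fact (count A s) :: real) = (\<Prod>s\<in>set_mset A. fact (count A s))"
      by (rule prod.mono_neutral_right) (auto simp: not_in_iff)
    then have "real (card (permutations_of_multiset A)) * (\<Prod>s\<in>UNIV. fact (count A s)) = fact k"
      using card_permutations_of_multiset_aux[of A, THEN arg_cong[where f = real]] \<open>size A = k\<close>
      by (simp only: of_nat_mult of_nat_prod of_nat_fact)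
    then have "g A * (real (card (permutations_of_multiset A)) * (\<Prod>s\<in>UNIV. fact (count A s)))
        / fact k = g A"
      by simp
    then show "(\<Sum>ss\<in>permutations_of_multiset A. g A * (\<Prod>s\<in>UNIV. fact (count A s)) / fact k) = g A"
      by (simp add: mult_ac)
  qed
  finally show ?thesis .
qed

locale species_partition =
  fixes I :: "nat \<Rightarrow> 's::finite \<Rightarrow> nat set" and N :: nat
  assumes disjoint: "\<And>s s'. s \<noteq> s' \<Longrightarrow> I N s \<inter> I N s' = {}"
    and cover: "(\<Union>s. I N s) = {1..N}"
begin

definition species_of :: "nat \<Rightarrow> 's" where
  "species_of i = (SOME s. i \<in> I N s)"

lemma species_subset: "I N s \<subseteq> {1..N}"
  using cover by auto

lemma finite_species: "finite (I N s)"
  using species_subset finite_subset by blast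

lemma species_of_mem: "i \<in> {1..N} \<Longrightarrow> i \<in> I N (species_of i)"
  unfolding species_of_def using cover by (metis UN_E someI_ex)

lemma species_of_eq: "i \<in> I N s \<Longrightarrow> species_of i = s"
  using species_of_mem[of i] species_subset disjoint by blast

lemma sum_over_species: "(\<Sum>i\<in>{1..N}. f i) = (\<Sum>s\<in>UNIV. \<Sum>i\<in>I N s. f i)"
  unfolding cover[symmetric] by (rule sum.UNION_disjoint) (auto simp: finite_species disjoint)

lemma sum_Nsp: "(\<Sum>s\<in>UNIV. real (Nsp I N s)) = real N"
  using sum_over_species[of "\<lambda>_. 1::real"] by (simp add: Nsp_def)

lemma Mbar_sum_sq_le: "u \<in> Mbar I N \<Longrightarrow> (\<Sum>i\<in>{1..N}. (u i)\<^sup>2) \<le> real N"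
  unfolding sum_over_species sum_Nsp[symmetric] by (intro sum_mono) (auto simp: Mbar_def)

lemma Mbar_abs_le_sqrt:
  assumes "u \<in> Mbar I N" "i \<in> {1..N}"
  shows "\<bar>u i\<bar> \<le> sqrt (real N)"
proof -
  have "(u i)\<^sup>2 \<le> (\<Sum>i\<in>{1..N}. (u i)\<^sup>2)"
    using assms(2) by (intro member_le_sum) auto
  then show ?thesis using Mbar_sum_sq_le[OF assms(1)] real_le_rsqrt by fastforce
qed

lemma Mbar_species_normalized:
  assumes "u \<in> Mbar I N"
  shows "(\<Sum>i\<in>I N s. (u i)\<^sup>2 / real (Nsp I N s)) \<le> 1"
proof (cases "Nsp I N s = 0")
  case False
  then show ?thesis
    using assms by (auto simp: Mbar_def sum_divide_distrib[symmetric] divide_le_eq_1)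
qed (simp add: Nsp_def finite_species)

lemma species_count_eq:
  assumes "set is \<subseteq> {1..N}"
  shows "species_count I N is = count (mset (map species_of is))"
proof
  fix s
  have "species_count I N is s = length (filter (\<lambda>i. i \<in> I N s) is)"
    unfolding species_count_def by (simp add: length_filter_conv_card)
  also have "filter (\<lambda>i. i \<in> I N s) is = filter (\<lambda>i. species_of i = s) is"
    using assms by (intro filter_cong refl) (metis species_of_eq species_of_mem subsetD)
  also have "length \<dots> = count (mset (map species_of is)) s"
    by (induction "is") auto
  finally show "species_count I N is s = count (mset (map species_of is)) s" .
qed

lemma Delta_idx_sq:
  assumes "set is \<subseteq> {1..N}"
  shows "(Delta_idx Delta I N is)\<^sup>2 = (Delta (count (mset (map species_of is))))\<^sup>2
     * (\<Prod>s\<in>UNIV. fact (count (mset (map species_of is)) s)) / fact (length is)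
     * (\<Prod>j<length is. inverse (real (Nsp I N (species_of (is ! j)))))"
  using prod_nth_eq_prod_count_mset[of "\<lambda>s. inverse (real (Nsp I N s))" "map species_of is"]
  unfolding Delta_idx_def Let_def species_count_eq[OF assms]
  by (subst real_sqrt_pow2) (auto intro!: mult_nonneg_nonneg divide_nonneg_nonneg prod_nonneg)

lemma index_tuples_species_fiber:
  assumes "length ss = k"
  shows "{is \<in> index_tuples N k. map species_of is = ss}
      = {is. length is = k \<and> (\<forall>j<k. is ! j \<in> I N (ss ! j))}"
proof (intro set_eqI iffI)
  fix xs assume "xs \<in> {is \<in> index_tuples N k. map species_of is = ss}"
  then have xs: "length xs = k" "set xs \<subseteq> {1..N}" "map species_of xs = ss"
    by (auto simp: index_tuples_def)
  have "xs ! j \<in> I N (ss ! j)" if "j < k" for j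
  proof -
    have "xs ! j \<in> {1..N}" using xs that nth_mem[of j xs] by blast
    then show ?thesis using xs that species_of_mem by auto
  qed
  then show "xs \<in> {is. length is = k \<and> (\<forall>j<k. is ! j \<in> I N (ss ! j))}"
    using xs by simp
next
  fix xs assume xs: "xs \<in> {is. length is = k \<and> (\<forall>j<k. is ! j \<in> I N (ss ! j))}"
  have "set xs \<subseteq> {1..N}"
  proof
    fix x assume "x \<in> set xs"
    then obtain j where "j < k" "x = xs ! j" using xs by (auto simp: in_set_conv_nth)
    then show "x \<in> {1..N}" using xs species_subset by blast
  qed
  moreover have "map species_of xs = ss"
    using xs assms by (intro nth_equalityI) (auto intro: species_of_eq)
  ultimately show "xs \<in> {is \<in> index_tuples N k. map species_of is = ss}"
    using xs by (simp add: index_tuples_def)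
qed

lemma sum_index_tuples_by_species:
  fixes F :: "'s list \<Rightarrow> 'a::comm_semiring_1"
  shows "(\<Sum>is\<in>index_tuples N k. F (map species_of is) * (\<Prod>j<k. w j (is ! j)))
   = (\<Sum>ss\<in>{ss. length ss = k}. F ss * (\<Prod>j<k. \<Sum>i\<in>I N (ss ! j). w j i))"
proof -
  have "(\<Sum>is\<in>index_tuples N k. F (map species_of is) * (\<Prod>j<k. w j (is ! j)))
      = (\<Sum>ss\<in>{ss. length ss = k}. \<Sum>is\<in>{is \<in> index_tuples N k. map species_of is = ss}.
            F ss * (\<Prod>j<k. w j (is ! j)))"
    using finite_lists_length_eq[of "UNIV :: 's set" k]
    by (subst sum.group[symmetric, OF finite_index_tuples, of _ "map species_of"])
       (auto simp: index_tuples_def intro!: sum.cong)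
  also have "\<dots> = (\<Sum>ss\<in>{ss. length ss = k}. F ss * (\<Prod>j<k. \<Sum>i\<in>I N (ss ! j). w j i))"
  proof (intro sum.cong refl)
    fix ss :: "'s list" assume "ss \<in> {ss. length ss = k}"
    then have "(\<Sum>is\<in>{is \<in> index_tuples N k. map species_of is = ss}. \<Prod>j<k. w j (is ! j))
        = (\<Prod>j<k. \<Sum>i\<in>I N (ss ! j). w j i)"
      by (simp add: index_tuples_species_fiber) (intro sum_lists_nth_prod finite_species)
    then show "(\<Sum>is\<in>{is \<in> index_tuples N k. map species_of is = ss}. F ss * (\<Prod>j<k. w j (is ! j)))
        = F ss * (\<Prod>j<k. \<Sum>i\<in>I N (ss ! j). w j i)"
      by (simp add: sum_distrib_left[symmetric])
  qed
  finally show ?thesis .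
qed

text \<open>After grouping the index tuples by their species word, each slot contributes a normalized
  sum of squares over one species, which is at most 1 on \<open>Mbar\<close>.\<close>
lemma sum_sq_Delta_idx_prod_le:
  assumes U: "\<And>j. j < k \<Longrightarrow> U j \<in> Mbar I N"
  shows "(\<Sum>is\<in>index_tuples N k. (Delta_idx Delta I N is * (\<Prod>j<k. U j (is ! j)))\<^sup>2)
     \<le> (\<Sum>A\<in>mset ` {ss. length ss = k}. (Delta (count A))\<^sup>2)"
proof -
  define G where "G ss = (Delta (count (mset ss)))\<^sup>2 * (\<Prod>s\<in>UNIV. fact (count (mset ss) s)) / fact k"
    for ss :: "'s list"
  define w where "w j i = (U j i)\<^sup>2 / real (Nsp I N (species_of i))" for j i
  have "(\<Sum>is\<in>index_tuples N k. (Delta_idx Delta I N is * (\<Prod>j<k. U j (is ! j)))\<^sup>2)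
      = (\<Sum>is\<in>index_tuples N k. G (map species_of is) * (\<Prod>j<k. w j (is ! j)))"
    by (intro sum.cong refl)
       (auto simp: index_tuples_def Delta_idx_sq G_def w_def power_mult_distrib
         prod_power_distrib prod.distrib divide_inverse mult_ac)
  also have "\<dots> = (\<Sum>ss\<in>{ss. length ss = k}. G ss * (\<Prod>j<k. \<Sum>i\<in>I N (ss ! j). w j i))"
    by (rule sum_index_tuples_by_species)
  also have "\<dots> \<le> (\<Sum>ss\<in>{ss. length ss = k}. G ss)"
  proof (intro sum_mono mult_right_le_one_le prod_le_1 conjI sum_nonneg)
    fix ss :: "'s list" and j assume "j \<in> {..<k}"
    have "(\<Sum>i\<in>I N (ss ! j). w j i) = (\<Sum>i\<in>I N (ss ! j). (U j i)\<^sup>2 / real (Nsp I N (ss ! j)))"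
      by (intro sum.cong) (auto simp: w_def species_of_eq)
    also have "\<dots> \<le> 1" using U \<open>j \<in> {..<k}\<close> by (intro Mbar_species_normalized) auto
    finally show "(\<Sum>i\<in>I N (ss ! j). w j i) \<le> 1" .
  qed (auto simp: G_def w_def intro!: prod_nonneg sum_nonneg divide_nonneg_nonneg mult_nonneg_nonneg)
  also have "\<dots> = (\<Sum>A\<in>mset ` {ss. length ss = k}. (Delta (count A))\<^sup>2)"
    unfolding G_def by (rule sum_words_multinomial)
  finally show ?thesis .
qed

end

lemma sum_Delta_sq_words_le_xi:
  fixes Delta :: "('s::finite \<Rightarrow> nat) \<Rightarrow> real"
  assumes summable: "(\<lambda>p. (Delta p)\<^sup>2 * (\<Prod>s\<in>UNIV. (1 + \<epsilon>) ^ p s)) summable_on Pset"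
    and "\<epsilon> > 0" and "k \<ge> 1"
  shows "(\<Sum>A\<in>mset ` {ss::'s list. length ss = k}. (Delta (count A))\<^sup>2)
     \<le> xi Delta (\<lambda>_. 1 + \<epsilon>) / (1 + \<epsilon>) ^ k"
proof -
  define f where "f p = (Delta p)\<^sup>2 * (\<Prod>s\<in>UNIV. (1 + \<epsilon>) ^ p s)" for p :: "'s \<Rightarrow> nat"
  define F where "F = mset ` {ss::'s list. length ss = k}"
  have "finite F"
    unfolding F_def using finite_lists_length_eq[of "UNIV :: 's set" k] by simp
  have size_F: "(\<Sum>s\<in>UNIV. count A s) = k" if "A \<in> F" for A
    using that sum_count_mset by (auto simp: F_def)
  have "inj_on count F" by (auto simp: inj_on_def multiset_eqI)
  have "count ` F \<subseteq> Pset" using size_F \<open>k \<ge> 1\<close> by (auto simp: Pset_def)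
  have "f (count A) = (Delta (count A))\<^sup>2 * (1 + \<epsilon>) ^ k" if "A \<in> F" for A
    by (simp add: f_def power_sum[symmetric] size_F[OF that])
  then have "(\<Sum>A\<in>F. (Delta (count A))\<^sup>2) * (1 + \<epsilon>) ^ k = (\<Sum>A\<in>F. f (count A))"
    by (simp add: sum_distrib_right)
  also have "\<dots> = infsum f (count ` F)"
    using \<open>finite F\<close> by (simp add: sum.reindex[OF \<open>inj_on count F\<close>])
  also have "\<dots> \<le> infsum f Pset"
    using \<open>finite F\<close> summable \<open>count ` F \<subseteq> Pset\<close> \<open>\<epsilon> > 0\<close>
    by (intro infsum_mono_neutral) (auto simp: f_def[abs_def] intro!: mult_nonneg_nonneg prod_nonneg)
  finally show ?thesis using \<open>\<epsilon> > 0\<close> by (simp add: F_def f_def[abs_def] xi_def pos_le_divide_eq)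
qed

lemma (in species_partition) sum_sq_Delta_idx_prod_le_xi:
  fixes Delta :: "('s \<Rightarrow> nat) \<Rightarrow> real"
  assumes summable: "(\<lambda>p. (Delta p)\<^sup>2 * (\<Prod>s\<in>UNIV. (1 + \<epsilon>) ^ p s)) summable_on Pset"
    and "\<epsilon> > 0" "k \<ge> 1" and U: "\<And>j. j < k \<Longrightarrow> U j \<in> Mbar I N"
  shows "(\<Sum>is\<in>index_tuples N k. (Delta_idx Delta I N is * (\<Prod>j<k. U j (is ! j)))\<^sup>2)
     \<le> (xi Delta (\<lambda>_. 1 + \<epsilon>) + 1) * (1 / (1 + \<epsilon>)) ^ k"
proof -
  have "(\<Sum>is\<in>index_tuples N k. (Delta_idx Delta I N is * (\<Prod>j<k. U j (is ! j)))\<^sup>2)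
      \<le> (\<Sum>A\<in>mset ` {ss. length ss = k}. (Delta (count A))\<^sup>2)"
    by (rule sum_sq_Delta_idx_prod_le[OF U])
  also have "\<dots> \<le> xi Delta (\<lambda>_. 1 + \<epsilon>) / (1 + \<epsilon>) ^ k"
    using summable \<open>\<epsilon> > 0\<close> \<open>k \<ge> 1\<close> by (rule sum_Delta_sq_words_le_xi)
  also have "\<dots> \<le> (xi Delta (\<lambda>_. 1 + \<epsilon>) + 1) / (1 + \<epsilon>) ^ k"
    using \<open>\<epsilon> > 0\<close> by (intro divide_right_mono) auto
  finally show ?thesis by (simp add: power_one_over)
qed

section \<open>Lattice nets in \<open>Mbar\<close>\<close>

definition trunc_real :: "real \<Rightarrow> real" where
  "trunc_real x = sgn x * of_int \<lfloor>\<bar>x\<bar>\<rfloor>"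

lemma abs_trunc_real_le: "\<bar>trunc_real x\<bar> \<le> \<bar>x\<bar>"
  unfolding trunc_real_def by (cases "x = 0") (auto simp: abs_mult sgn_if)

lemma abs_diff_trunc_real_le: "\<bar>x - trunc_real x\<bar> \<le> 1"
  unfolding trunc_real_def by (cases x "0::real" rule: linorder_cases) (auto simp: sgn_if, linarith+)

lemma trunc_real_Ints: "trunc_real x \<in> \<int>"
  unfolding trunc_real_def by (auto simp: sgn_if)

lemma int_l1_ball_subset_box:
  assumes "finite A"
  shows "{m \<in> A \<rightarrow>\<^sub>E (UNIV :: int set). (\<Sum>i\<in>A. \<bar>m i\<bar>) \<le> int M} \<subseteq> A \<rightarrow>\<^sub>E {-int M..int M}"
proof (intro subsetI PiE_I)
  fix m i assume m: "m \<in> {m \<in> A \<rightarrow>\<^sub>E UNIV. (\<Sum>i\<in>A. \<bar>m i\<bar>) \<le> int M}"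
  show "i \<in> A \<Longrightarrow> m i \<in> {-int M..int M}"
    using m member_le_sum[of i A "\<lambda>i. \<bar>m i\<bar>"] assms by (auto simp: abs_le_iff)
  show "i \<notin> A \<Longrightarrow> m i = undefined" using m by auto
qed

lemma sum_half_pow_interval: "(\<Sum>j\<in>{-int M..int M}. (1/2::real) ^ nat \<bar>j\<bar>) = 3 - 2 * (1/2) ^ M"
proof (induction M)
  case (Suc M)
  have "{-int (Suc M)..int (Suc M)} = insert (- int (Suc M)) (insert (int (Suc M)) {-int M..int M})"
    by auto
  then have "(\<Sum>j\<in>{-int (Suc M)..int (Suc M)}. (1/2::real) ^ nat \<bar>j\<bar>)
      = 2 * (1/2) ^ Suc M + (\<Sum>j\<in>{-int M..int M}. (1/2::real) ^ nat \<bar>j\<bar>)"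
    by (simp add: nat_add_distrib)
  with Suc show ?case by simp
qed simp

text \<open>Every point of the ball has weight \<open>2^M (1/2)^|m|\<^sub>1 \<ge> 1\<close>, and the total weight of the
  box \<open>[-M, M]\<^sup>A\<close> is at most \<open>2^M 3^|A|\<close>.\<close>
lemma card_int_l1_ball_le:
  assumes A: "finite A"
  shows "real (card {m \<in> A \<rightarrow>\<^sub>E (UNIV :: int set). (\<Sum>i\<in>A. \<bar>m i\<bar>) \<le> int M}) \<le> 2 ^ M * 3 ^ card A"
proof -
  define C where "C = {m \<in> A \<rightarrow>\<^sub>E (UNIV :: int set). (\<Sum>i\<in>A. \<bar>m i\<bar>) \<le> int M}"
  define D where "D = A \<rightarrow>\<^sub>E {-int M..int M}"
  have "C \<subseteq> D" unfolding C_def D_def by (rule int_l1_ball_subset_box[OF A])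
  have "finite D" unfolding D_def using A by (intro finite_PiE) auto
  have "real (card C) \<le> (\<Sum>m\<in>C. 2 ^ M * (\<Prod>i\<in>A. (1/2::real) ^ nat \<bar>m i\<bar>))"
  proof -
    have "1 \<le> 2 ^ M * (\<Prod>i\<in>A. (1/2::real) ^ nat \<bar>m i\<bar>)" if "m \<in> C" for m
    proof -
      have "int (\<Sum>i\<in>A. nat \<bar>m i\<bar>) = (\<Sum>i\<in>A. \<bar>m i\<bar>)" by (simp add: of_nat_sum)
      moreover have "(\<Sum>i\<in>A. \<bar>m i\<bar>) \<le> int M" using that by (simp add: C_def)
      ultimately have "(\<Sum>i\<in>A. nat \<bar>m i\<bar>) \<le> M" by linarith
      then have "(1/2::real) ^ M \<le> (1/2) ^ (\<Sum>i\<in>A. nat \<bar>m i\<bar>)" by (intro power_decreasing) auto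
      then show ?thesis by (simp add: power_sum power_one_over field_simps)
    qed
    then show ?thesis using sum_mono[of C "\<lambda>_. 1::real"] by simp
  qed
  also have "\<dots> \<le> (\<Sum>m\<in>D. 2 ^ M * (\<Prod>i\<in>A. (1/2::real) ^ nat \<bar>m i\<bar>))"
    using \<open>C \<subseteq> D\<close> \<open>finite D\<close> by (intro sum_mono2) (auto intro!: mult_nonneg_nonneg prod_nonneg)
  also have "\<dots> = 2 ^ M * (\<Prod>i\<in>A. \<Sum>j\<in>{-int M..int M}. (1/2::real) ^ nat \<bar>j\<bar>)"
    unfolding D_def sum_distrib_left[symmetric] by (subst prod_sum_PiE) (auto simp: A)
  also have "\<dots> \<le> 2 ^ M * 3 ^ card A"
    unfolding sum_half_pow_interval using power_le_one[of "1/2::real" M]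
    by (auto intro!: mult_left_mono power_mono)
  finally show ?thesis by (simp add: C_def)
qed

lemma two_three_pow_le_exp:
  assumes "k \<ge> 1"
  shows "(2::real) ^ (2 * k * N) * 3 ^ N \<le> exp (4 * real k * real N)"
proof -
  have "(2::real) ^ (2 * k * N) * 3 ^ N \<le> 2 ^ (2 * k * N) * 4 ^ N"
    by (intro mult_left_mono power_mono) auto
  also have "\<dots> = 2 ^ (2 * k * N + 2 * N)" by (simp add: power_add power_mult)
  also have "\<dots> \<le> 2 ^ (4 * k * N)" using assms by (intro power_increasing) auto
  also have "\<dots> \<le> exp 1 ^ (4 * k * N)" using exp_ge_add_one_self[of 1] by (intro power_mono) auto
  also have "\<dots> = exp (4 * real k * real N)" by (simp flip: exp_of_nat_mult add: mult_ac)
  finally show ?thesis .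
qed

context species_partition
begin

text \<open>Rounding towards zero, so that rounding does not leave \<open>Mbar\<close>.\<close>
definition lattice_round :: "real \<Rightarrow> (nat \<Rightarrow> real) \<Rightarrow> nat \<Rightarrow> real" where
  "lattice_round \<eta> u = (\<lambda>i. if i \<in> {1..N} then \<eta> * trunc_real (u i / \<eta>) else 0)"

definition lattice_net :: "real \<Rightarrow> (nat \<Rightarrow> real) set" where
  "lattice_net \<eta> = {v \<in> Mbar I N. (\<forall>i\<in>{1..N}. v i / \<eta> \<in> \<int>) \<and> (\<forall>i. i \<notin> {1..N} \<longrightarrow> v i = 0)}"

lemma lattice_net_subset_Mbar: "lattice_net \<eta> \<subseteq> Mbar I N"
  unfolding lattice_net_def by auto

lemma lattice_round_in_net:
  assumes "\<eta> > 0" and u: "u \<in> Mbar I N"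
  shows "lattice_round \<eta> u \<in> lattice_net \<eta>"
proof -
  have "\<bar>lattice_round \<eta> u i\<bar> \<le> \<bar>u i\<bar>" for i
    using \<open>\<eta> > 0\<close> abs_trunc_real_le[of "u i / \<eta>"]
    by (simp add: lattice_round_def abs_mult field_simps)
  then have "(\<Sum>i\<in>I N s. (lattice_round \<eta> u i)\<^sup>2) \<le> (\<Sum>i\<in>I N s. (u i)\<^sup>2)" for s
    by (intro sum_mono) (simp add: abs_le_square_iff)
  then have "lattice_round \<eta> u \<in> Mbar I N"
    using u unfolding Mbar_def by (blast intro: order.trans)
  moreover have "lattice_round \<eta> u i / \<eta> \<in> \<int>" if "i \<in> {1..N}" for i
    using that \<open>\<eta> > 0\<close> trunc_real_Ints by (simp add: lattice_round_def)
  ultimately show ?thesis by (simp add: lattice_net_def lattice_round_def)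
qed

lemma lattice_round_error_in_Mbar:
  assumes "\<eta> > 0"
  shows "(\<lambda>i. (u i - lattice_round \<eta> u i) / \<eta>) \<in> Mbar I N"
  unfolding Mbar_def
proof safe
  fix s
  have "((u i - lattice_round \<eta> u i) / \<eta>)\<^sup>2 \<le> 1" if "i \<in> I N s" for i
  proof -
    have "i \<in> {1..N}" using that species_subset by blast
    then have "(u i - lattice_round \<eta> u i) / \<eta> = u i / \<eta> - trunc_real (u i / \<eta>)"
      using assms by (simp add: lattice_round_def diff_divide_distrib)
    then show ?thesis using abs_diff_trunc_real_le by (simp add: abs_square_le_1)
  qed
  then have "(\<Sum>i\<in>I N s. ((u i - lattice_round \<eta> u i) / \<eta>)\<^sup>2) \<le> (\<Sum>i\<in>I N s. 1)"
    by (intro sum_mono) auto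
  then show "(\<Sum>i\<in>I N s. ((u i - lattice_round \<eta> u i) / \<eta>)\<^sup>2) \<le> real (Nsp I N s)"
    by (simp add: Nsp_def)
qed

lemma Mbar_sum_abs_le: "u \<in> Mbar I N \<Longrightarrow> (\<Sum>i\<in>{1..N}. \<bar>u i\<bar>) \<le> real N"
proof -
  assume "u \<in> Mbar I N"
  have "\<bar>x\<bar> \<le> (1 + x\<^sup>2) / 2" for x :: real
    using sum_squares_ge_zero[of "\<bar>x\<bar> - 1" 0] by (simp add: power2_eq_square algebra_simps)
  then have "(\<Sum>i\<in>{1..N}. \<bar>u i\<bar>) \<le> (real N + (\<Sum>i\<in>{1..N}. (u i)\<^sup>2)) / 2"
    using sum_mono[of "{1..N}" "\<lambda>i. \<bar>u i\<bar>" "\<lambda>i. (1 + (u i)\<^sup>2) / 2"]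
    by (simp add: sum.distrib sum_divide_distrib[symmetric])
  then show ?thesis using Mbar_sum_sq_le[OF \<open>u \<in> Mbar I N\<close>] by simp
qed

lemma lattice_net_outside: "v \<in> lattice_net \<eta> \<Longrightarrow> i \<notin> {1..N} \<Longrightarrow> v i = 0"
  by (simp add: lattice_net_def)

lemma lattice_net_floor:
  assumes "v \<in> lattice_net \<eta>" "\<eta> > 0" "i \<in> {1..N}"
  shows "\<eta> * of_int \<lfloor>v i / \<eta>\<rfloor> = v i"
proof -
  have "v i / \<eta> \<in> \<int>" using assms by (simp add: lattice_net_def)
  then obtain m where m: "v i / \<eta> = of_int m" by (auto elim: Ints_cases)
  then have "\<lfloor>v i / \<eta>\<rfloor> = m" by simp
  moreover have "v i = \<eta> * of_int m" using m \<open>\<eta> > 0\<close> by (simp add: divide_eq_eq mult.commute)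
  ultimately show ?thesis by simp
qed

lemma lattice_net_sum_abs_floor_le:
  assumes v: "v \<in> lattice_net \<eta>" and "\<eta> > 0" and "real N \<le> real M * \<eta>"
  shows "(\<Sum>i\<in>{1..N}. \<bar>\<lfloor>v i / \<eta>\<rfloor>\<bar>) \<le> int M"
proof -
  have "real_of_int \<bar>\<lfloor>v i / \<eta>\<rfloor>\<bar> = \<bar>v i\<bar> / \<eta>" if "i \<in> {1..N}" for i
    using arg_cong[OF lattice_net_floor[OF v \<open>\<eta> > 0\<close> that], of abs] \<open>\<eta> > 0\<close>
    by (simp add: abs_mult eq_divide_eq mult.commute)
  then have "real_of_int (\<Sum>i\<in>{1..N}. \<bar>\<lfloor>v i / \<eta>\<rfloor>\<bar>) = (\<Sum>i\<in>{1..N}. \<bar>v i\<bar>) / \<eta>"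
    by (simp add: of_int_sum sum_divide_distrib)
  also have "\<dots> \<le> real N / \<eta>"
    using Mbar_sum_abs_le v lattice_net_subset_Mbar \<open>\<eta> > 0\<close> by (blast intro: divide_right_mono less_imp_le)
  also have "\<dots> \<le> real M" using assms by (simp add: pos_divide_le_eq)
  finally have "real_of_int (\<Sum>i\<in>{1..N}. \<bar>\<lfloor>v i / \<eta>\<rfloor>\<bar>) \<le> real_of_int (int M)"
    by (simp only: of_int_of_nat_eq)
  then show ?thesis by (simp only: of_int_le_iff)
qed

text \<open>The net is encoded injectively by integer vectors of \<open>\<ell>\<^sup>1\<close>-norm at most \<open>N / \<eta> \<le> M\<close>.\<close>
lemma card_lattice_net_le:
  assumes "\<eta> > 0" and "real N \<le> real M * \<eta>"
  shows "finite (lattice_net \<eta>) \<and> real (card (lattice_net \<eta>)) \<le> 2 ^ M * 3 ^ N"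
proof -
  define C where "C = {m \<in> {1..N} \<rightarrow>\<^sub>E (UNIV :: int set). (\<Sum>i\<in>{1..N}. \<bar>m i\<bar>) \<le> int M}"
  define code where "code v = restrict (\<lambda>i. \<lfloor>v i / \<eta>\<rfloor>) {1..N}" for v :: "nat \<Rightarrow> real"
  have inj: "inj_on code (lattice_net \<eta>)"
  proof (rule inj_onI, rule ext)
    fix v w i assume v: "v \<in> lattice_net \<eta>" and w: "w \<in> lattice_net \<eta>" and "code v = code w"
    show "v i = w i"
    proof (cases "i \<in> {1..N}")
      case True
      then have "\<lfloor>v i / \<eta>\<rfloor> = \<lfloor>w i / \<eta>\<rfloor>"
        using fun_cong[OF \<open>code v = code w\<close>, of i] by (simp add: code_def)
      then show ?thesis
        using lattice_net_floor[OF v \<open>\<eta> > 0\<close> True] lattice_net_floor[OF w \<open>\<eta> > 0\<close> True] by metis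
    qed (metis lattice_net_outside v w)
  qed
  have sub: "code ` lattice_net \<eta> \<subseteq> C"
    using lattice_net_sum_abs_floor_le assms by (auto simp: C_def code_def)
  have "finite C"
    unfolding C_def by (rule finite_subset[OF int_l1_ball_subset_box]) (simp_all add: finite_PiE)
  then have "finite (lattice_net \<eta>)"
    using finite_imageD[OF finite_subset[OF sub] inj] by blast
  have "card (lattice_net \<eta>) = card (code ` lattice_net \<eta>)" by (rule card_image[OF inj, symmetric])
  also have "\<dots> \<le> card C" by (rule card_mono[OF \<open>finite C\<close> sub])
  finally have "real (card (lattice_net \<eta>)) \<le> real (card C)" by simp
  also have "\<dots> \<le> 2 ^ M * 3 ^ N"
    unfolding C_def using card_int_l1_ball_le[of "{1..N}" M] by simp
  finally show ?thesis using \<open>finite (lattice_net \<eta>)\<close> by simp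
qed

lemma card_lattice_net_le_exp:
  assumes "k \<ge> 1"
  shows "finite (lattice_net (1 / (2 * real k))) \<and> real (card (lattice_net (1 / (2 * real k)))) \<le> exp (4 * real k * real N)"
  using card_lattice_net_le[of "1 / (2 * real k)" "2 * k * N"] two_three_pow_le_exp[of k N] assms by auto

lemma multilinear_form_bounded_Mbar:
  assumes "\<And>j. j < k \<Longrightarrow> U j \<in> Mbar I N"
  shows "\<bar>multilinear_form N k a U\<bar> \<le> (\<Sum>is\<in>index_tuples N k. \<bar>a is\<bar>) * sqrt (real N) ^ k"
proof -
  have "\<bar>\<Prod>j<k. U j (is ! j)\<bar> \<le> sqrt (real N) ^ k" if "is \<in> index_tuples N k" for "is"
  proof -
    have "set is \<subseteq> {1..N}" "length is = k"
      using \<open>is \<in> index_tuples N k\<close> by (auto simp: index_tuples_def)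
    then have "is ! j \<in> {1..N}" if "j < k" for j
      using that nth_mem[of j "is"] by blast
    then have "\<bar>U j (is ! j)\<bar> \<le> sqrt (real N)" if "j < k" for j
      using that assms by (intro Mbar_abs_le_sqrt) auto
    then show ?thesis
      unfolding abs_prod using prod_mono[of "{..<k}" "\<lambda>j. \<bar>U j (is ! j)\<bar>" "\<lambda>_. sqrt (real N)"] by simp
  qed
  then show ?thesis
    unfolding multilinear_form_def sum_distrib_right
    by (intro order.trans[OF sum_abs] sum_mono) (simp add: abs_mult mult_left_mono)
qed

lemma multilinear_form_Mbar_le_twice_net:
  assumes "k \<ge> 1"
    and on_net: "\<And>V. (\<And>j. j < k \<Longrightarrow> V j \<in> lattice_net (1 / (2 * real k))) \<Longrightarrow>
                  \<bar>multilinear_form N k a V\<bar> \<le> b"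
    and U: "\<And>j. j < k \<Longrightarrow> U j \<in> Mbar I N"
  shows "\<bar>multilinear_form N k a U\<bar> \<le> 2 * b"
proof (rule multilinear_form_le_twice_net[OF _ _ _ lattice_net_subset_Mbar _
      multilinear_form_bounded_Mbar on_net U])
  show "(\<lambda>_. 0) \<in> Mbar I N" by (simp add: Mbar_def)
  have "1 / (2 * real k) > 0" using \<open>k \<ge> 1\<close> by simp
  then show "\<exists>v\<in>lattice_net (1 / (2 * real k)). (\<lambda>i. (u i - v i) / (1 / (2 * real k))) \<in> Mbar I N"
    if "u \<in> Mbar I N" for u
    using that lattice_round_in_net lattice_round_error_in_Mbar by blast
qed (use \<open>k \<ge> 1\<close> in auto)

lemma scaled_diff_in_Mbar:
  assumes "c > 0" and "\<And>s. sqrt (Rs I N s (\<lambda>i. \<sigma> i - \<pi> i) (\<lambda>i. \<sigma> i - \<pi> i)) \<le> c"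
  shows "(\<lambda>i. (\<sigma> i - \<pi> i) / c) \<in> Mbar I N"
  unfolding Mbar_def
proof safe
  fix s
  show "(\<Sum>i\<in>I N s. ((\<sigma> i - \<pi> i) / c)\<^sup>2) \<le> real (Nsp I N s)"
  proof (cases "Nsp I N s = 0")
    case False
    define R where "R = Rs I N s (\<lambda>i. \<sigma> i - \<pi> i) (\<lambda>i. \<sigma> i - \<pi> i)"
    have "R \<ge> 0" unfolding R_def Rs_def by (auto intro!: divide_nonneg_nonneg sum_nonneg)
    moreover have "(sqrt R)\<^sup>2 \<le> c\<^sup>2"
      using assms(2)[of s] \<open>R \<ge> 0\<close> by (intro power_mono) (auto simp: R_def)
    ultimately have "R \<le> c\<^sup>2" by simp
    have "(\<Sum>i\<in>I N s. ((\<sigma> i - \<pi> i) / c)\<^sup>2) = R * real (Nsp I N s) / c\<^sup>2"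
      using False by (simp add: R_def Rs_def power_divide sum_divide_distrib[symmetric] power2_eq_square)
    also have "\<dots> \<le> c\<^sup>2 * real (Nsp I N s) / c\<^sup>2"
      using \<open>R \<le> c\<^sup>2\<close> by (intro divide_right_mono mult_right_mono) auto
    also have "\<dots> = real (Nsp I N s)" using \<open>c > 0\<close> by simp
    finally show ?thesis .
  qed (simp add: Nsp_def finite_species)
qed

end

section \<open>Concentration on the nets\<close>

lemma multilinear_form_gauss_linear:
  "multilinear_form N k (\<lambda>is. w is * J is) U
   = (\<Sum>is\<in>index_tuples N k. (w is * (\<Prod>j<k. U j (is ! j))) * J is)"
  unfolding multilinear_form_def by (intro sum.cong) (auto simp: mult_ac)

lemma measurable_multilinear_form [measurable]:
  "(\<lambda>J. multilinear_form N k (\<lambda>is. w is * J is) U) \<in> borel_measurable gauss_space"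
  unfolding multilinear_form_def by measurable

lemma exp_union_bound_le:
  assumes "k \<ge> 1" "N \<ge> 1" "t > 0"
  shows "exp (4 * real k * real N) ^ k * exp (- (real N * (t + 7) * (real k)\<^sup>2))
       \<le> exp (- t * real N) * exp (- 3) ^ k"
proof -
  have "real k \<le> (real k)\<^sup>2" "1 \<le> (real k)\<^sup>2" "(real k)\<^sup>2 \<le> real N * (real k)\<^sup>2"
    using assms by (auto simp: power2_eq_square intro: order.trans[OF _ mult_right_mono[of 1]])
  then have "t * real N \<le> t * real N * (real k)\<^sup>2"
    using assms mult_left_mono[of 1 "(real k)\<^sup>2" "t * real N"] by simp
  then have "4 * real k * real N * real k - real N * (t + 7) * (real k)\<^sup>2 \<le> - t * real N - 3 * real k"
    using \<open>real k \<le> (real k)\<^sup>2\<close> \<open>(real k)\<^sup>2 \<le> real N * (real k)\<^sup>2\<close>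
    by (simp add: power2_eq_square algebra_simps)
  then show ?thesis
    by (simp flip: exp_of_nat_mult exp_add add: mult_ac)
qed

text \<open>At the level \<open>\<surd>N deviation_level V \<rho> t k\<close> a Gaussian of variance \<open>V \<rho>^k\<close> has tail
  \<open>exp(-(t + 7) N k\<^sup>2)\<close>: the part \<open>4 N k\<^sup>2\<close> of the exponent pays for the \<open>exp(4kN)\<close> points of the
  net of mesh \<open>1/(2k)\<close>, and \<open>3 N k\<^sup>2 \<ge> 3 k\<close> makes the bounds summable over \<open>k\<close>.\<close>
definition deviation_level :: "real \<Rightarrow> real \<Rightarrow> real \<Rightarrow> nat \<Rightarrow> real" where
  "deviation_level V \<rho> t k = sqrt (2 * V * (t + 7)) * real k * sqrt \<rho> ^ k"

lemma deviation_level_sq: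
  assumes "V > 0" "\<rho> > 0" "t \<ge> 0"
  shows "(sqrt (real N) * deviation_level V \<rho> t k)\<^sup>2 / (2 * (V * \<rho> ^ k)) = real N * (t + 7) * (real k)\<^sup>2"
proof -
  have "(sqrt \<rho> ^ k)\<^sup>2 = (sqrt \<rho>)\<^sup>2 ^ k" by (simp only: power_mult[symmetric] mult.commute)
  then have "(sqrt (real N) * deviation_level V \<rho> t k)\<^sup>2 = real N * (2 * V * (t + 7)) * (real k)\<^sup>2 * \<rho> ^ k"
    using assms by (simp add: deviation_level_def power_mult_distrib)
  then show ?thesis using assms by (simp add: field_simps)
qed

context species_partition
begin

lemma measure_deviation_le:
  fixes Delta :: "('s \<Rightarrow> nat) \<Rightarrow> real"
  assumes "N \<ge> 1" "t > 0" "V > 0" "\<rho> > 0" "k \<ge> 1" and U: "\<And>j. j < k \<Longrightarrow> U j \<in> Mbar I N"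
    and variance: "(\<Sum>is\<in>index_tuples N k. (Delta_idx Delta I N is * (\<Prod>j<k. U j (is ! j)))\<^sup>2) \<le> V * \<rho> ^ k"
  shows "measure gauss_space {J \<in> space gauss_space. sqrt (real N) * deviation_level V \<rho> t k
        < \<bar>multilinear_form N k (\<lambda>is. Delta_idx Delta I N is * J is) U\<bar>}
     \<le> 2 * exp (- (real N * (t + 7) * (real k)\<^sup>2))"
proof -
  define a where "a = sqrt (real N) * deviation_level V \<rho> t k"
  have "a > 0" using assms by (simp add: a_def deviation_level_def)
  have "measure gauss_space {J \<in> space gauss_space. a
        < \<bar>multilinear_form N k (\<lambda>is. Delta_idx Delta I N is * J is) U\<bar>}
      \<le> 2 * exp (- a\<^sup>2 / (2 * (V * \<rho> ^ k)))"
    using gauss_linear_abs_tail[OF finite_index_tuples _ variance \<open>a > 0\<close>] assms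
    by (simp add: multilinear_form_gauss_linear)
  also have "- a\<^sup>2 / (2 * (V * \<rho> ^ k)) = - (real N * (t + 7) * (real k)\<^sup>2)"
    unfolding a_def minus_divide_left[symmetric]
      deviation_level_sq[OF \<open>V > 0\<close> \<open>\<rho> > 0\<close> less_imp_le[OF \<open>t > 0\<close>]] ..
  finally show ?thesis by (simp add: a_def)
qed

lemma measure_net_deviation_le:
  fixes Delta :: "('s \<Rightarrow> nat) \<Rightarrow> real"
  assumes "N \<ge> 1" "t > 0" "k \<ge> 1" "V > 0" "\<rho> > 0"
    and variance: "\<And>U. (\<And>j. j < k \<Longrightarrow> U j \<in> Mbar I N) \<Longrightarrow>
       (\<Sum>is\<in>index_tuples N k. (Delta_idx Delta I N is * (\<Prod>j<k. U j (is ! j)))\<^sup>2) \<le> V * \<rho> ^ k"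
  shows "measure gauss_space (\<Union>U\<in>{..<k} \<rightarrow>\<^sub>E lattice_net (1 / (2 * real k)).
     {J \<in> space gauss_space. sqrt (real N) * deviation_level V \<rho> t k
        < \<bar>multilinear_form N k (\<lambda>is. Delta_idx Delta I N is * J is) U\<bar>})
   \<le> 2 * exp (- t * real N) * exp (- 3) ^ k"
proof -
  interpret prob_space gauss_space by (rule prob_space_gauss_space)
  define net where "net = lattice_net (1 / (2 * real k))"
  define E where "E U = {J \<in> space gauss_space. sqrt (real N) * deviation_level V \<rho> t k
        < \<bar>multilinear_form N k (\<lambda>is. Delta_idx Delta I N is * J is) U\<bar>}" for U
  have net: "finite net" "real (card net) \<le> exp (4 * real k * real N)"
    using card_lattice_net_le_exp[OF \<open>k \<ge> 1\<close>] by (auto simp: net_def)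
  have tail: "measure gauss_space (E U) \<le> 2 * exp (- (real N * (t + 7) * (real k)\<^sup>2))"
    if "U \<in> {..<k} \<rightarrow>\<^sub>E net" for U
    unfolding E_def using that lattice_net_subset_Mbar assms
    by (intro measure_deviation_le variance) (auto simp: net_def)
  have "E U \<in> sets gauss_space" for U unfolding E_def by measurable
  then have "measure gauss_space (\<Union>U\<in>{..<k} \<rightarrow>\<^sub>E net. E U)
      \<le> (\<Sum>U\<in>{..<k} \<rightarrow>\<^sub>E net. measure gauss_space (E U))"
    using net by (intro finite_measure_subadditive_finite finite_PiE) auto
  also have "\<dots> \<le> real (card ({..<k} \<rightarrow>\<^sub>E net)) * (2 * exp (- (real N * (t + 7) * (real k)\<^sup>2)))"
    by (rule sum_bounded_above) (rule tail)
  also have "\<dots> = real (card net) ^ k * (2 * exp (- (real N * (t + 7) * (real k)\<^sup>2)))"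
    by (simp add: card_PiE)
  also have "\<dots> \<le> exp (4 * real k * real N) ^ k * (2 * exp (- (real N * (t + 7) * (real k)\<^sup>2)))"
    using net by (intro mult_right_mono power_mono) auto
  also have "\<dots> \<le> 2 * exp (- t * real N) * exp (- 3) ^ k"
    using exp_union_bound_le[OF \<open>k \<ge> 1\<close> \<open>N \<ge> 1\<close> \<open>t > 0\<close>] by simp
  finally show ?thesis by (simp add: E_def net_def)
qed

end

lemma (in prob_space) prob_UN_lt_of_exp_bound:
  assumes events: "\<And>m. B m \<in> events"
    and bound: "\<And>m. prob (B m) \<le> 2 * E * exp (- 3) ^ Suc m" and "E > 0"
  shows "prob (\<Union>m. B m) < E"
proof -
  define x where "x = exp (- 3 :: real)"
  have "0 < x" "4 * x \<le> 1"
    using exp_ge_add_one_self[of 3] by (auto simp: x_def exp_minus field_simps)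
  have geometric: "(\<lambda>m. 2 * E * x * x ^ m) sums (2 * E * x * (1 / (1 - x)))"
    using \<open>0 < x\<close> \<open>4 * x \<le> 1\<close> by (intro sums_mult geometric_sums) auto
  have bound': "prob (B m) \<le> 2 * E * x * x ^ m" for m
    using bound[of m] by (simp add: x_def mult_ac)
  have summable: "summable (\<lambda>m. prob (B m))"
    using bound' by (intro summable_comparison_test'[OF sums_summable[OF geometric]]) auto
  have "prob (\<Union>m. B m) \<le> (\<Sum>m. prob (B m))"
    using events summable by (intro finite_measure_subadditive_countably) auto
  also have "\<dots> \<le> (\<Sum>m. 2 * E * x * x ^ m)"
    using bound' summable sums_summable[OF geometric] by (rule suminf_le)
  also have "\<dots> = 2 * E * x * (1 / (1 - x))"
    using geometric by (rule sums_unique[symmetric])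
  also have "\<dots> < E" using \<open>0 < x\<close> \<open>4 * x \<le> 1\<close> \<open>E > 0\<close> by (simp add: field_simps)
  finally show ?thesis .
qed

context species_partition
begin

lemma good_event_exists:
  fixes Delta :: "('s \<Rightarrow> nat) \<Rightarrow> real"
  assumes "N \<ge> 1" "t > 0" "V > 0" "\<rho> > 0"
    and variance: "\<And>k U. k \<ge> 1 \<Longrightarrow> (\<And>j. j < k \<Longrightarrow> U j \<in> Mbar I N) \<Longrightarrow>
       (\<Sum>is\<in>index_tuples N k. (Delta_idx Delta I N is * (\<Prod>j<k. U j (is ! j)))\<^sup>2) \<le> V * \<rho> ^ k"
  obtains A where "A \<in> sets gauss_space" "measure gauss_space A > 1 - exp (- t * real N)"
    and "\<And>J k U. J \<in> A \<Longrightarrow> k \<ge> 1 \<Longrightarrow> (\<And>j. j < k \<Longrightarrow> U j \<in> lattice_net (1 / (2 * real k))) \<Longrightarrow>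
           \<bar>multilinear_form N k (\<lambda>is. Delta_idx Delta I N is * J is) U\<bar>
             \<le> sqrt (real N) * deviation_level V \<rho> t k"
proof -
  interpret prob_space gauss_space by (rule prob_space_gauss_space)
  define B where "B k = (\<Union>U\<in>{..<k} \<rightarrow>\<^sub>E lattice_net (1 / (2 * real k)).
     {J \<in> space gauss_space. sqrt (real N) * deviation_level V \<rho> t k
        < \<bar>multilinear_form N k (\<lambda>is. Delta_idx Delta I N is * J is) U\<bar>})" for k
  have "B (Suc m) \<in> events" for m
    using card_lattice_net_le_exp[of "Suc m"] unfolding B_def by (intro sets.finite_UN finite_PiE) auto
  moreover have "prob (B (Suc m)) \<le> 2 * exp (- t * real N) * exp (- 3) ^ Suc m" for m
    unfolding B_def using assms by (intro measure_net_deviation_le variance) auto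
  ultimately have "prob (\<Union>m. B (Suc m)) < exp (- t * real N)"
    by (intro prob_UN_lt_of_exp_bound) auto
  show ?thesis
  proof (rule that[of "space gauss_space - (\<Union>m. B (Suc m))"])
    show "space gauss_space - (\<Union>m. B (Suc m)) \<in> events"
      using \<open>\<And>m. B (Suc m) \<in> events\<close> by auto
    show "prob (space gauss_space - (\<Union>m. B (Suc m))) > 1 - exp (- t * real N)"
      using \<open>\<And>m. B (Suc m) \<in> events\<close> \<open>prob (\<Union>m. B (Suc m)) < exp (- t * real N)\<close>
      by (subst prob_compl) auto
  next
    fix J k U assume J: "J \<in> space gauss_space - (\<Union>m. B (Suc m))" and "k \<ge> 1"
      and U: "\<And>j. j < k \<Longrightarrow> U j \<in> lattice_net (1 / (2 * real k))"
    then have "J \<notin> B k" by (cases k) auto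
    moreover have "restrict U {..<k} \<in> {..<k} \<rightarrow>\<^sub>E lattice_net (1 / (2 * real k))" using U by auto
    ultimately have "\<bar>multilinear_form N k (\<lambda>is. Delta_idx Delta I N is * J is) (restrict U {..<k})\<bar>
        \<le> sqrt (real N) * deviation_level V \<rho> t k"
      using J unfolding B_def by (auto simp: not_less)
    then show "\<bar>multilinear_form N k (\<lambda>is. Delta_idx Delta I N is * J is) U\<bar>
        \<le> sqrt (real N) * deviation_level V \<rho> t k"
      by (subst (asm) multilinear_form_cong[of k _ U]) auto
  qed
qed

end

section \<open>The Lipschitz estimate\<close>

lemma HN_eq_suminf_multilinear_form:
  "HN Delta I N J \<sigma>
   = sqrt (real N) * (\<Sum>m. multilinear_form N (Suc m) (\<lambda>is. Delta_idx Delta I N is * J is) (\<lambda>_. \<sigma>))"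
  unfolding HN_def multilinear_form_def index_tuples_def
  by (intro arg_cong[where f = "\<lambda>x. sqrt (real N) * x"] arg_cong[where f = suminf] ext sum.cong) auto

lemma summable_sq_times_geometric:
  fixes y :: real
  assumes "0 \<le> y" "y < 1"
  shows "summable (\<lambda>m. (real m + 1)\<^sup>2 * y ^ m)"
proof (rule summable_comparison_test'[OF termdiff_converges[of y 1 "diffs (\<lambda>_. 1)"]])
  show "norm ((real m + 1)\<^sup>2 * y ^ m) \<le> diffs (diffs (\<lambda>_. 1)) m * y ^ m" for m
    using assms by (auto simp: diffs_def power2_eq_square algebra_simps intro!: mult_right_mono)
  show "summable (\<lambda>n. diffs (\<lambda>_. 1::real) n * x ^ n)" if "norm x < 1" for x :: real
    using termdiff_converges[of x 1 "\<lambda>_. 1"] that by simp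
qed (use assms in auto)

lemma summable_deviation_level:
  assumes "0 < \<rho>" "\<rho> < 1"
  shows "summable (\<lambda>m. real (Suc m) * deviation_level V \<rho> t (Suc m))"
proof -
  have "summable (\<lambda>m. (sqrt (2 * V * (t + 7)) * sqrt \<rho>) * ((real m + 1)\<^sup>2 * sqrt \<rho> ^ m))"
    using assms by (intro summable_mult summable_sq_times_geometric) auto
  then show ?thesis
    by (simp add: deviation_level_def power2_eq_square algebra_simps)
qed

lemma le_mult_of_forall_gt:
  fixes x K r :: real
  assumes "K \<ge> 0" and "\<And>c. c > r \<Longrightarrow> x \<le> K * c"
  shows "x \<le> K * r"
proof (rule field_le_epsilon)
  fix e :: real assume "e > 0"
  then have "x \<le> K * (r + e / (K + 1))" using \<open>K \<ge> 0\<close> by (intro assms(2)) simp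
  also have "\<dots> \<le> K * r + e"
    using \<open>K \<ge> 0\<close> \<open>e > 0\<close> by (simp add: distrib_left field_simps)
  finally show "x \<le> K * r + e" .
qed

context species_partition
begin

lemma HN_diff_le:
  assumes bound: "\<And>k U. k \<ge> 1 \<Longrightarrow> (\<And>j. j < k \<Longrightarrow> U j \<in> Mbar I N) \<Longrightarrow>
      \<bar>multilinear_form N k (\<lambda>is. Delta_idx Delta I N is * J is) U\<bar> \<le> \<beta> k"
    and summable: "summable (\<lambda>m. real (Suc m) * \<beta> (Suc m))"
    and \<sigma>: "\<sigma> \<in> Mbar I N" and \<pi>: "\<pi> \<in> Mbar I N"
    and "c > 0" and diff: "(\<lambda>i. (\<sigma> i - \<pi> i) / c) \<in> Mbar I N"
  shows "\<bar>HN Delta I N J \<sigma> - HN Delta I N J \<pi>\<bar> \<le> sqrt (real N) * c * (\<Sum>m. real (Suc m) * \<beta> (Suc m))"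
proof -
  define g where "g \<omega> m = multilinear_form N (Suc m) (\<lambda>is. Delta_idx Delta I N is * J is) (\<lambda>_. \<omega>)"
    for \<omega> m
  have "\<bar>g \<omega> m\<bar> \<le> real (Suc m) * \<beta> (Suc m)" if "\<omega> \<in> Mbar I N" for \<omega> m
  proof -
    have "\<bar>g \<omega> m\<bar> \<le> \<beta> (Suc m)" unfolding g_def using that by (intro bound) auto
    also have "\<dots> = 1 * \<beta> (Suc m)" by simp
    also have "\<dots> \<le> real (Suc m) * \<beta> (Suc m)"
      using \<open>\<bar>g \<omega> m\<bar> \<le> \<beta> (Suc m)\<close> by (intro mult_right_mono) auto
    finally show ?thesis .
  qed
  then have summable_g: "summable (g \<omega>)" if "\<omega> \<in> Mbar I N" for \<omega>
    using that by (intro summable_comparison_test'[OF summable]) auto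
  have "\<bar>g \<sigma> m - g \<pi> m\<bar> \<le> c * (real (Suc m) * \<beta> (Suc m))" for m
    using multilinear_form_diff_le[of "Suc m" "Mbar I N" N _ "\<beta> (Suc m)" "\<lambda>_. \<sigma>" "\<lambda>_. \<pi>" c]
      bound \<sigma> \<pi> diff \<open>c > 0\<close> by (simp add: g_def mult_ac)
  then have "\<bar>\<Sum>m. g \<sigma> m - g \<pi> m\<bar> \<le> (\<Sum>m. c * (real (Suc m) * \<beta> (Suc m)))"
    using norm_suminf_le[of "\<lambda>m. g \<sigma> m - g \<pi> m"] summable_mult[OF summable, of c] by simp
  also have "\<dots> = c * (\<Sum>m. real (Suc m) * \<beta> (Suc m))" by (rule suminf_mult[OF summable])
  finally have "\<bar>\<Sum>m. g \<sigma> m - g \<pi> m\<bar> \<le> c * (\<Sum>m. real (Suc m) * \<beta> (Suc m))" .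
  moreover have "HN Delta I N J \<sigma> - HN Delta I N J \<pi> = sqrt (real N) * (\<Sum>m. g \<sigma> m - g \<pi> m)"
    unfolding HN_eq_suminf_multilinear_form g_def[symmetric] right_diff_distrib[symmetric]
      suminf_diff[OF summable_g[OF \<sigma>] summable_g[OF \<pi>]] ..
  ultimately show ?thesis by (simp add: abs_mult mult_left_mono mult.assoc)
qed

lemma HN_diff_le_Max:
  assumes bound: "\<And>k U. k \<ge> 1 \<Longrightarrow> (\<And>j. j < k \<Longrightarrow> U j \<in> Mbar I N) \<Longrightarrow>
      \<bar>multilinear_form N k (\<lambda>is. Delta_idx Delta I N is * J is) U\<bar> \<le> \<beta> k"
    and summable: "summable (\<lambda>m. real (Suc m) * \<beta> (Suc m))"
    and \<sigma>: "\<sigma> \<in> Mbar I N" and \<pi>: "\<pi> \<in> Mbar I N"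
  shows "\<bar>HN Delta I N J \<sigma> - HN Delta I N J \<pi>\<bar>
     \<le> sqrt (real N) * (\<Sum>m. real (Suc m) * \<beta> (Suc m))
       * Max (range (\<lambda>s. sqrt (Rs I N s (\<lambda>i. \<sigma> i - \<pi> i) (\<lambda>i. \<sigma> i - \<pi> i))))"
proof (rule le_mult_of_forall_gt)
  have "0 \<le> \<beta> k" if "k \<ge> 1" for k using bound[OF that, of "\<lambda>_. \<sigma>"] \<sigma> by fastforce
  then show "0 \<le> sqrt (real N) * (\<Sum>m. real (Suc m) * \<beta> (Suc m))"
    by (intro mult_nonneg_nonneg suminf_nonneg summable) auto
next
  fix c assume c: "c > Max (range (\<lambda>s. sqrt (Rs I N s (\<lambda>i. \<sigma> i - \<pi> i) (\<lambda>i. \<sigma> i - \<pi> i))))"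
  have le_Max: "sqrt (Rs I N s (\<lambda>i. \<sigma> i - \<pi> i) (\<lambda>i. \<sigma> i - \<pi> i))
      \<le> Max (range (\<lambda>s. sqrt (Rs I N s (\<lambda>i. \<sigma> i - \<pi> i) (\<lambda>i. \<sigma> i - \<pi> i))))" for s
    by (rule Max_ge) auto
  then have le_c: "sqrt (Rs I N s (\<lambda>i. \<sigma> i - \<pi> i) (\<lambda>i. \<sigma> i - \<pi> i)) \<le> c" for s
    using c by (meson less_imp_le order.trans)
  have "0 \<le> sqrt (Rs I N s (\<lambda>i. \<sigma> i - \<pi> i) (\<lambda>i. \<sigma> i - \<pi> i))" for s
    by (auto simp: Rs_def intro!: divide_nonneg_nonneg sum_nonneg)
  from this[of undefined] have "c > 0" using c le_Max[of undefined] by linarith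
  then show "\<bar>HN Delta I N J \<sigma> - HN Delta I N J \<pi>\<bar> \<le> sqrt (real N) * (\<Sum>m. real (Suc m) * \<beta> (Suc m)) * c"
    using HN_diff_le[OF bound summable \<sigma> \<pi> \<open>c > 0\<close> scaled_diff_in_Mbar[OF \<open>c > 0\<close> le_c]]
    by (simp add: mult_ac)
qed

end

lemma (in species_partition) HN_lipschitz_of_net_bounds:
  assumes "N \<ge> 1" "0 < \<rho>" "\<rho> < 1"
    and on_nets: "\<And>k U. k \<ge> 1 \<Longrightarrow> (\<And>j. j < k \<Longrightarrow> U j \<in> lattice_net (1 / (2 * real k))) \<Longrightarrow>
        \<bar>multilinear_form N k (\<lambda>is. Delta_idx Delta I N is * J is) U\<bar>
          \<le> sqrt (real N) * deviation_level V \<rho> t k"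
    and "\<sigma> \<in> Mbar I N" "\<pi> \<in> Mbar I N"
  shows "\<bar>HN Delta I N J \<sigma> - HN Delta I N J \<pi>\<bar> / real N
      \<le> 2 * (\<Sum>m. real (Suc m) * deviation_level V \<rho> t (Suc m))
        * Max (range (\<lambda>s. sqrt (Rs I N s (\<lambda>i. \<sigma> i - \<pi> i) (\<lambda>i. \<sigma> i - \<pi> i))))"
proof -
  define S where "S = (\<Sum>m. real (Suc m) * deviation_level V \<rho> t (Suc m))"
  have summable: "summable (\<lambda>m. real (Suc m) * deviation_level V \<rho> t (Suc m))"
    using assms by (intro summable_deviation_level)
  have "\<bar>HN Delta I N J \<sigma> - HN Delta I N J \<pi>\<bar>
      \<le> sqrt (real N) * (\<Sum>m. real (Suc m) * (2 * (sqrt (real N) * deviation_level V \<rho> t (Suc m))))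
        * Max (range (\<lambda>s. sqrt (Rs I N s (\<lambda>i. \<sigma> i - \<pi> i) (\<lambda>i. \<sigma> i - \<pi> i))))"
  proof (rule HN_diff_le_Max[OF _ _ \<open>\<sigma> \<in> Mbar I N\<close> \<open>\<pi> \<in> Mbar I N\<close>])
    show "\<bar>multilinear_form N k (\<lambda>is. Delta_idx Delta I N is * J is) U\<bar>
        \<le> 2 * (sqrt (real N) * deviation_level V \<rho> t k)"
      if "k \<ge> 1" "\<And>j. j < k \<Longrightarrow> U j \<in> Mbar I N" for k U
      using that by (intro multilinear_form_Mbar_le_twice_net on_nets) auto
    show "summable (\<lambda>m. real (Suc m) * (2 * (sqrt (real N) * deviation_level V \<rho> t (Suc m))))"
      using summable_mult[OF summable, of "2 * sqrt (real N)"] by (simp add: mult_ac)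
  qed
  also have "(\<Sum>m. real (Suc m) * (2 * (sqrt (real N) * deviation_level V \<rho> t (Suc m))))
      = 2 * sqrt (real N) * S"
    unfolding S_def using suminf_mult[OF summable, of "2 * sqrt (real N)"] by (simp add: mult_ac)
  also have "sqrt (real N) * (2 * sqrt (real N) * S) = real N * (2 * S)"
    by (simp flip: mult.assoc)
  finally show ?thesis
    using \<open>N \<ge> 1\<close> by (simp add: S_def divide_le_eq mult_ac)
qed

lemma (in species_partition) lipschitz_event_of_variance_bound:
  fixes Delta :: "('s \<Rightarrow> nat) \<Rightarrow> real"
  assumes "N \<ge> 1" "t > 0" "V > 0" "0 < \<rho>" "\<rho> < 1"
    and variance: "\<And>k U. k \<ge> 1 \<Longrightarrow> (\<And>j. j < k \<Longrightarrow> U j \<in> Mbar I N) \<Longrightarrow>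
       (\<Sum>is\<in>index_tuples N k. (Delta_idx Delta I N is * (\<Prod>j<k. U j (is ! j)))\<^sup>2) \<le> V * \<rho> ^ k"
  shows "\<exists>A\<in>sets gauss_space.
           A \<subseteq> {J \<in> space gauss_space. \<forall>\<sigma>\<in>Mbar I N. \<forall>\<pi>\<in>Mbar I N.
                 \<bar>HN Delta I N J \<sigma> - HN Delta I N J \<pi>\<bar> / real N
                   \<le> 2 * (\<Sum>m. real (Suc m) * deviation_level V \<rho> t (Suc m))
                     * Max (range (\<lambda>s. sqrt (Rs I N s (\<lambda>i. \<sigma> i - \<pi> i) (\<lambda>i. \<sigma> i - \<pi> i))))}
           \<and> measure gauss_space A > 1 - exp (- t * real N)"
proof -
  obtain A where "A \<in> sets gauss_space" "measure gauss_space A > 1 - exp (- t * real N)"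
    and on_nets: "\<And>J k U. J \<in> A \<Longrightarrow> k \<ge> 1 \<Longrightarrow> (\<And>j. j < k \<Longrightarrow> U j \<in> lattice_net (1 / (2 * real k))) \<Longrightarrow>
        \<bar>multilinear_form N k (\<lambda>is. Delta_idx Delta I N is * J is) U\<bar>
          \<le> sqrt (real N) * deviation_level V \<rho> t k"
    using good_event_exists[OF assms(1-4) variance] by blast
  moreover have "A \<subseteq> space gauss_space" using \<open>A \<in> sets gauss_space\<close> by (rule sets.sets_into_space)
  moreover note HN_lipschitz_of_net_bounds[OF \<open>N \<ge> 1\<close> \<open>0 < \<rho>\<close> \<open>\<rho> < 1\<close> on_nets]
  ultimately show ?thesis
    by (intro bexI[of _ A] conjI subsetI CollectI ballI) auto
qed

definition lipschitz_constant :: "(('s::finite \<Rightarrow> nat) \<Rightarrow> real) \<Rightarrow> real \<Rightarrow> real \<Rightarrow> real" where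
  "lipschitz_constant Delta \<epsilon> t = 2 * (\<Sum>m. real (Suc m)
     * deviation_level (xi Delta (\<lambda>_. 1 + \<epsilon>) + 1) (1 / (1 + \<epsilon>)) t (Suc m))"

lemma xi_nonneg: "x \<ge> 0 \<Longrightarrow> xi Delta (\<lambda>_. x) \<ge> 0"
  unfolding xi_def by (intro infsum_nonneg mult_nonneg_nonneg prod_nonneg) auto

lemma lipschitz_constant_pos:
  assumes "\<epsilon> > 0" "t > 0"
  shows "lipschitz_constant Delta \<epsilon> t > 0"
  using assms xi_nonneg[of "1 + \<epsilon>" Delta] unfolding lipschitz_constant_def
  by (intro mult_pos_pos suminf_pos summable_deviation_level) (auto simp: deviation_level_def)

lemma (in species_partition) lipschitz_event_exists:
  fixes Delta :: "('s \<Rightarrow> nat) \<Rightarrow> real"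
  assumes "N \<ge> 1" "t > 0" "\<epsilon> > 0"
    and summable: "(\<lambda>p. (Delta p)\<^sup>2 * (\<Prod>s\<in>UNIV. (1 + \<epsilon>) ^ p s)) summable_on Pset"
  shows "\<exists>A\<in>sets gauss_space.
           A \<subseteq> {J \<in> space gauss_space. \<forall>\<sigma>\<in>Mbar I N. \<forall>\<pi>\<in>Mbar I N.
                 \<bar>HN Delta I N J \<sigma> - HN Delta I N J \<pi>\<bar> / real N
                   \<le> lipschitz_constant Delta \<epsilon> t
                     * Max (range (\<lambda>s. sqrt (Rs I N s (\<lambda>i. \<sigma> i - \<pi> i) (\<lambda>i. \<sigma> i - \<pi> i))))}
           \<and> measure gauss_space A > 1 - exp (- t * real N)"
  unfolding lipschitz_constant_def
proof (rule lipschitz_event_of_variance_bound[OF \<open>N \<ge> 1\<close> \<open>t > 0\<close>])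
  show "xi Delta (\<lambda>_. 1 + \<epsilon>) + 1 > 0" using xi_nonneg[of "1 + \<epsilon>" Delta] \<open>\<epsilon> > 0\<close> by simp
  show "0 < 1 / (1 + \<epsilon>)" "1 / (1 + \<epsilon>) < 1" using \<open>\<epsilon> > 0\<close> by simp_all
qed (rule sum_sq_Delta_idx_prod_le_xi[OF summable \<open>\<epsilon> > 0\<close>])

theorem lemma25:
  fixes Delta :: "('s::finite \<Rightarrow> nat) \<Rightarrow> real"
    and I :: "nat \<Rightarrow> 's \<Rightarrow> nat set"
    and lam :: "'s \<Rightarrow> real"
  assumes part_disj: "\<And>N s s'. N \<ge> 1 \<Longrightarrow> s \<noteq> s' \<Longrightarrow> I N s \<inter> I N s' = {}"
    and part_cover: "\<And>N. N \<ge> 1 \<Longrightarrow> (\<Union>s. I N s) = {1..N}"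
    and ratio: "\<And>s. (\<lambda>N. real (Nsp I N s) / real N) \<longlonglongrightarrow> lam s"
    and lam: "\<And>s. 0 < lam s \<and> lam s < 1"
    and Delta_nonneg: "\<And>p. p \<in> Pset \<Longrightarrow> Delta p \<ge> 0"
    and xi_finite: "\<exists>\<epsilon>>0. (\<lambda>p. (Delta p)\<^sup>2 * (\<Prod>s\<in>UNIV. (1 + \<epsilon>) ^ p s)) summable_on Pset"
  shows "\<forall>t>0. \<exists>L>0. \<forall>N\<ge>1. \<exists>A\<in>sets gauss_space.
           A \<subseteq> {J \<in> space gauss_space. \<forall>\<sigma>\<in>Mbar I N. \<forall>\<pi>\<in>Mbar I N.
                 \<bar>HN Delta I N J \<sigma> - HN Delta I N J \<pi>\<bar> / real N
                   \<le> L * Max (range (\<lambda>s. sqrt (Rs I N s (\<lambda>i. \<sigma> i - \<pi> i) (\<lambda>i. \<sigma> i - \<pi> i))))}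
           \<and> measure gauss_space A > 1 - exp (- t * real N)"
proof -
  obtain \<epsilon> where "\<epsilon> > 0"
    and summable: "(\<lambda>p. (Delta p)\<^sup>2 * (\<Prod>s\<in>UNIV. (1 + \<epsilon>) ^ p s)) summable_on Pset"
    using xi_finite by blast
  have partition: "species_partition I N" if "N \<ge> 1" for N
    using part_disj part_cover that by unfold_locales auto
  show ?thesis
    by (intro allI impI, rule_tac x = "lipschitz_constant Delta \<epsilon> t" in exI)
      (intro conjI allI impI lipschitz_constant_pos \<open>\<epsilon> > 0\<close>
        species_partition.lipschitz_event_exists[OF partition _ _ \<open>\<epsilon> > 0\<close> summable])
qed

end
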